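(* Let $K_0=0$ and let $\Omega\subset\mathbb R^d$ be a bounded convex domain with $C^1$ boundary, with inner unit normal $\nu(X)$ at $X\in\partial\Omega$. Define $$h_*(x)=\inf_{X\in\partial\Omega}\big[h_0+\lambda_0\,\nu(X)\cdot(x-X)\big],\qquad x\in\mathbb R^d$$ (equivalently, the lower envelope of all affine functions $H$ with $|\nabla H|=\lambda_0$, $H\ge h_0$ on $\Omega$ and $H(X)=h_0$ for some $X\in\partial\Omega$). Then $h_*$ (restricted to $\mathbb R^d\setminus\Omega$) is a weak solution of $\det D^2(-u)=0$ in $\{u>0\}\setminus\overline\Omega$, $u=h_0$ on $\partial\Omega$, $|\nabla u|=\lambda_0$ on $\Gamma_u$.
   Context: Setting: $d\ge 2$; $h_0>0$, $\lambda_0>0$ constants. For $u:\mathbb R^d\setminus\Omega\to\mathbb R$ let $U$ denote the function equal to $u$ off $\Omega$ and to $h_0$ on $\Omega$; $u$ is called concave if $U$ is concave on $\mathbb R^d$. Write $\{u>0\}$ for $\{U>0\}$ and $\Gamma_u=\partial\{u>0\}\setminus\overline\Omega$. For a convex function $f$ on an open set $D$, $\omega_x(f)=\{p: f(y)\ge f(x)+p\cdot(y-x)\ \forall y\in D\}$ and $\omega_E(f)=\bigcup_{x\in E}\omega_x(f)$. A concave $u$ is a weak solution (with $K_0=0$) if: (a) $|\omega_E(-u)|=0$ for every Borel $E\subset\{u>0\}\setminus\overline\Omega$ (gradient mapping of $-u$ on $\{u>0\}\setminus\overline\Omega$); (b) $u=h_0$ on $\partial\Omega$; (c) at every $x_0\in\Gamma_u$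 at which the convex set $\{u>0\}$ has a unique supporting hyperplane, with inner unit normal $\nu$, $\lim_{t\downarrow 0}u(x_0+t\nu)/t=\lambda_0$. *)

theory Defs
  imports "HOL-Analysis.Analysis"
begin

definition C1_defining ::
  "'a::euclidean_space set \<Rightarrow> 'a \<Rightarrow> 'a set \<Rightarrow> ('a \<Rightarrow> real) \<Rightarrow> ('a \<Rightarrow> 'a) \<Rightarrow> bool" where
  "C1_defining \<Omega> X V \<rho> \<rho>' \<longleftrightarrow>
     open V \<and> X \<in> V \<and>
     (\<forall>y\<in>V. (\<rho> has_derivative (\<lambda>h. \<rho>' y \<bullet> h)) (at y)) \<and>
     continuous_on V \<rho>' \<and>
     (\<forall>y\<in>V. \<rho>' y \<noteq> 0) \<and>
     \<Omega> \<inter> V = {y\<in>V. \<rho> y < 0}"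

definition C1_boundary :: "'a::euclidean_space set \<Rightarrow> bool" where
  "C1_boundary \<Omega> \<longleftrightarrow> (\<forall>X\<in>frontier \<Omega>. \<exists>V \<rho> \<rho>'. C1_defining \<Omega> X V \<rho> \<rho>')"

definition inner_unit_normal :: "'a::euclidean_space set \<Rightarrow> 'a \<Rightarrow> 'a \<Rightarrow> bool" where
  "inner_unit_normal \<Omega> X n \<longleftrightarrow>
     (\<exists>V \<rho> \<rho>'. C1_defining \<Omega> X V \<rho> \<rho>' \<and> n = - ((1 / norm (\<rho>' X)) *\<^sub>R \<rho>' X))"

definition h_star :: "'a::euclidean_space set \<Rightarrow> ('a \<Rightarrow> 'a) \<Rightarrow> real \<Rightarrow> real \<Rightarrow> 'a \<Rightarrow> real" where
  "h_star \<Omega> \<nu> h0 lam0 x = (INF X\<in>frontier \<Omega>. h0 + lam0 * (\<nu> X \<bullet> (x - X)))"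

definition ext_fun :: "'a set \<Rightarrow> real \<Rightarrow> ('a \<Rightarrow> real) \<Rightarrow> 'a \<Rightarrow> real" where
  "ext_fun \<Omega> h0 u x = (if x \<in> \<Omega> then h0 else u x)"

definition subgrad :: "'a::euclidean_space set \<Rightarrow> ('a \<Rightarrow> real) \<Rightarrow> 'a \<Rightarrow> 'a set" where
  "subgrad D f x = {p. \<forall>y\<in>D. f y \<ge> f x + p \<bullet> (y - x)}"

definition subgrad_set :: "'a::euclidean_space set \<Rightarrow> ('a \<Rightarrow> real) \<Rightarrow> 'a set \<Rightarrow> 'a set" where
  "subgrad_set D f E = (\<Union>x\<in>E. subgrad D f x)"

definition supporting_hyperplane :: "'a::euclidean_space set \<Rightarrow> 'a \<Rightarrow> 'a set \<Rightarrow> bool" where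
  "supporting_hyperplane C x0 H \<longleftrightarrow>
     (\<exists>a. a \<noteq> 0 \<and> H = {y. a \<bullet> y = a \<bullet> x0} \<and> (\<forall>y\<in>C. a \<bullet> y \<ge> a \<bullet> x0))"

definition hyperplane_inner_normal :: "'a::euclidean_space set \<Rightarrow> 'a \<Rightarrow> 'a set \<Rightarrow> 'a \<Rightarrow> bool" where
  "hyperplane_inner_normal C x0 H n \<longleftrightarrow>
     norm n = 1 \<and> H = {y. n \<bullet> y = n \<bullet> x0} \<and> (\<forall>y\<in>C. n \<bullet> (y - x0) \<ge> 0)"

definition weak_solution ::
  "'a::euclidean_space set \<Rightarrow> real \<Rightarrow> real \<Rightarrow> ('a \<Rightarrow> real) \<Rightarrow> bool" where
  "weak_solution \<Omega> h0 lam0 u \<longleftrightarrow>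
     (let U = ext_fun \<Omega> h0 u;
          P = {x. U x > 0};
          D = P - closure \<Omega>;
          \<Gamma> = frontier P - closure \<Omega>
      in concave_on UNIV U \<and>
         (\<forall>E. E \<in> sets borel \<and> E \<subseteq> D \<longrightarrow> negligible (subgrad_set D (\<lambda>x. - u x) E)) \<and>
         (\<forall>x\<in>frontier \<Omega>. u x = h0) \<and>
         (\<forall>x0\<in>\<Gamma>. \<forall>H n. (\<exists>!H'. supporting_hyperplane P x0 H') \<and>
               supporting_hyperplane P x0 H \<and> hyperplane_inner_normal P x0 H n \<longrightarrow>
               ((\<lambda>t. u (x0 + t *\<^sub>R n) / t) \<longlongrightarrow> lam0) (at_right 0)))"

end

theory Submission
  imports Defs
begin

text \<open>Off \<Omega>, h_* coincides with the profile h0 - lam0 * dist(x, closure \<Omega>): for every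
  boundary point X the affine function h0 + lam0 * \<nu>(X) \<bullet> (x - X) dominates the profile because
  \<nu>(X) is the normal of a supporting half-space of the convex set \<Omega>, and equality holds at the
  point of closure \<Omega> nearest to x, where the normal is forced to point away from x. Since a weak
  solution only sees its values off \<Omega>, it suffices to check the profile. It is concave because
  the distance to a convex set is convex; every local subgradient of the distance off the set is
  the unit vector pointing away from the nearest point, so all gradients of the profile lie on
  the sphere of radius lam0, a null set; and on the free boundary, at distance h0/lam0, a
  supporting normal of the positivity set points to the nearest point of closure \<Omega>, along which
  the profile grows exactly like lam0 * t.\<close>

subsection \<open>Boundary geometry of a convex domain with inner normals\<close>

lemma has_real_derivative_along_line:
  fixes f :: "'a::real_normed_vector \<Rightarrow> real"
  assumes "(f has_derivative f') (at x)"
  shows "((\<lambda>s. f (x + s *\<^sub>R h)) has_real_derivative f' h) (at 0)"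
proof -
  interpret f': bounded_linear f'
    using assms by (rule has_derivative_bounded_linear)
  have "(f has_derivative f') (at (x + 0 *\<^sub>R h))"
    using assms by simp
  then have "((\<lambda>s. f (x + s *\<^sub>R h)) has_derivative (\<lambda>s. f' (s *\<^sub>R h))) (at 0)"
    by (rule has_derivative_compose[rotated]) (auto intro!: derivative_eq_intros)
  then show ?thesis
    by (simp add: has_field_derivative_def f'.scaleR mult.commute[of _ "f' h"])
qed

lemma eventually_sign_along_ray:
  fixes f :: "'a::real_normed_vector \<Rightarrow> real"
  assumes "(f has_derivative f') (at x)" and "f x = 0"
  shows "f' h < 0 \<Longrightarrow> eventually (\<lambda>s. f (x + s *\<^sub>R h) < 0) (at_right 0)"
    and "f' h > 0 \<Longrightarrow> eventually (\<lambda>s. f (x + s *\<^sub>R h) > 0) (at_right 0)"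
  using DERIV_neg_dec_right[OF has_real_derivative_along_line[OF assms(1)]]
    DERIV_pos_inc_right[OF has_real_derivative_along_line[OF assms(1)]] assms(2)
  by (auto simp: eventually_at_right_field)

lemma eventually_ray_in_open:
  fixes x h :: "'a::real_normed_vector"
  assumes "open V" and "x \<in> V"
  shows "eventually (\<lambda>s. x + s *\<^sub>R h \<in> V) (at_right 0)"
proof -
  have "((\<lambda>s. x + s *\<^sub>R h) \<longlongrightarrow> x + 0 *\<^sub>R h) (at_right 0)"
    by (intro tendsto_intros)
  then show ?thesis
    using assms by (simp add: topological_tendstoD)
qed

lemma C1_defining_vanishes_at_frontier:
  assumes "open \<Omega>" and "X \<in> frontier \<Omega>" and "C1_defining \<Omega> X V \<rho> \<rho>'"
  shows "\<rho> X = 0"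
proof -
  have V: "open V" "X \<in> V" and eq: "\<Omega> \<inter> V = {y\<in>V. \<rho> y < 0}"
    and "isCont \<rho> X"
    using assms(3) has_derivative_continuous unfolding C1_defining_def by blast+
  have "X \<notin> \<Omega>" "X \<in> closure \<Omega>"
    using assms(1,2) by (auto simp: frontier_def interior_open)
  have "\<rho> X \<ge> 0"
  proof (rule ccontr)
    assume "\<not> \<rho> X \<ge> 0"
    then have "X \<in> \<Omega> \<inter> V"
      unfolding eq using V by simp
    then show False
      using \<open>X \<notin> \<Omega>\<close> by blast
  qed
  moreover have "\<not> \<rho> X > 0"
  proof
    assume "\<rho> X > 0"
    then have "eventually (\<lambda>y. 0 < \<rho> y) (at X)"
      using \<open>isCont \<rho> X\<close> by (metis isCont_def order_tendstoD(1))
    moreover have "eventually (\<lambda>y. y \<in> V) (at X)"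
      using V by (rule eventually_at_in_open')
    ultimately have "eventually (\<lambda>y. y \<in> V \<and> 0 < \<rho> y) (at X)"
      by (rule eventually_conj[rotated])
    moreover have "frequently (\<lambda>y. y \<in> \<Omega>) (at X)"
      using \<open>X \<in> closure \<Omega>\<close> \<open>X \<notin> \<Omega>\<close>
      by (simp add: closure_def islimpt_iff_eventually frequently_def)
    ultimately have "\<exists>\<^sub>F y in at X. (y \<in> V \<and> 0 < \<rho> y) \<and> y \<in> \<Omega>"
      by (rule frequently_eventually_conj[rotated])
    then obtain y where "y \<in> V" "0 < \<rho> y" "y \<in> \<Omega>"
      by (auto dest: frequently_ex)
    then have "y \<in> {y\<in>V. \<rho> y < 0}"
      unfolding eq[symmetric] by blast
    with \<open>0 < \<rho> y\<close> show False
      by simp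
  qed
  ultimately show ?thesis
    by simp
qed

lemma C1_defining_eventually_inside:
  assumes "open \<Omega>" and "X \<in> frontier \<Omega>" and "C1_defining \<Omega> X V \<rho> \<rho>'" and "\<rho>' X \<bullet> h < 0"
  shows "eventually (\<lambda>s. X + s *\<^sub>R h \<in> \<Omega>) (at_right 0)"
proof -
  have V: "open V" "X \<in> V" and eq: "\<Omega> \<inter> V = {y\<in>V. \<rho> y < 0}"
    and "(\<rho> has_derivative (\<lambda>h. \<rho>' X \<bullet> h)) (at X)"
    using assms(3) unfolding C1_defining_def by blast+
  then have "eventually (\<lambda>s. \<rho> (X + s *\<^sub>R h) < 0) (at_right 0)"
    using eventually_sign_along_ray(1) C1_defining_vanishes_at_frontier[OF assms(1-3)] assms(4)
    by blast
  with eventually_ray_in_open[OF V] show ?thesis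
    by eventually_elim (use eq in blast)
qed

lemma C1_defining_eventually_outside:
  assumes "open \<Omega>" and "X \<in> frontier \<Omega>" and "C1_defining \<Omega> X V \<rho> \<rho>'" and "\<rho>' X \<bullet> h > 0"
  shows "eventually (\<lambda>s. X + s *\<^sub>R h \<notin> \<Omega>) (at_right 0)"
proof -
  have V: "open V" "X \<in> V" and eq: "\<Omega> \<inter> V = {y\<in>V. \<rho> y < 0}"
    and "(\<rho> has_derivative (\<lambda>h. \<rho>' X \<bullet> h)) (at X)"
    using assms(3) unfolding C1_defining_def by blast+
  then have "eventually (\<lambda>s. \<rho> (X + s *\<^sub>R h) > 0) (at_right 0)"
    using eventually_sign_along_ray(2) C1_defining_vanishes_at_frontier[OF assms(1-3)] assms(4)
    by blast
  with eventually_ray_in_open[OF V] show ?thesis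
    by eventually_elim (use eq in force)
qed

lemma inner_unit_normal_norm:
  assumes "inner_unit_normal \<Omega> X n"
  shows "norm n = 1"
  using assms by (auto simp: inner_unit_normal_def C1_defining_def)

lemma inner_unit_normal_supporting:
  assumes "open \<Omega>" and "convex \<Omega>" and "X \<in> frontier \<Omega>" and "inner_unit_normal \<Omega> X n"
    and "y \<in> closure \<Omega>"
  shows "n \<bullet> (y - X) \<ge> 0"
proof -
  obtain V \<rho> \<rho>' where D: "C1_defining \<Omega> X V \<rho> \<rho>'" and n: "n = - ((1 / norm (\<rho>' X)) *\<^sub>R \<rho>' X)"
    using assms(4) unfolding inner_unit_normal_def by blast
  have "n \<bullet> (z - X) \<ge> 0" if "z \<in> \<Omega>" for z
  proof (rule ccontr)
    assume "\<not> n \<bullet> (z - X) \<ge> 0"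
    then have "\<rho>' X \<bullet> (z - X) / norm (\<rho>' X) > 0"
      by (simp add: n)
    then have "\<rho>' X \<bullet> (z - X) > 0"
      by (simp add: zero_less_divide_iff)
    from C1_defining_eventually_outside[OF assms(1,3) D this] eventually_at_right_real[OF zero_less_one]
    have "eventually (\<lambda>s. X + s *\<^sub>R (z - X) \<notin> \<Omega> \<and> s \<in> {0<..<1}) (at_right (0::real))"
      by (rule eventually_conj)
    from eventually_happens'[OF trivial_limit_at_right_real this]
    obtain s :: real where "X + s *\<^sub>R (z - X) \<notin> \<Omega>" "0 < s" "s < 1"
      by auto
    moreover have "X - s *\<^sub>R (X - z) \<in> interior \<Omega>"
      using \<open>z \<in> \<Omega>\<close> assms(1,3) \<open>0 < s\<close> \<open>s < 1\<close>
      by (intro mem_interior_closure_convex_shrink[OF assms(2)]) (auto simp: interior_open frontier_def)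
    ultimately show False
      using assms(1) by (simp add: interior_open algebra_simps)
  qed
  then have "\<Omega> \<subseteq> {z. n \<bullet> z \<ge> n \<bullet> X}"
    by (auto simp: inner_diff_right)
  then have "closure \<Omega> \<subseteq> {z. n \<bullet> z \<ge> n \<bullet> X}"
    by (rule closure_minimal) (rule closed_halfspace_ge)
  with assms(5) show ?thesis
    by (auto simp: inner_diff_right)
qed

lemma inner_eq_norm_mult_inner_sgn:
  fixes x y :: "'a::real_inner"
  shows "x \<bullet> y = norm x * (sgn x \<bullet> y)"
  by (cases "x = 0") (simp_all add: sgn_div_norm)

lemma sgn_inner_self:
  fixes x :: "'a::real_inner"
  shows "sgn x \<bullet> x = norm x"
  using inner_eq_norm_mult_inner_sgn[of x x]
  by (cases "x = 0") (simp_all add: power2_eq_square flip: power2_norm_eq_inner)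

lemma sgn_eq_neg_sgn_if_halfspace_subset:
  fixes a g :: "'a::real_inner"
  assumes "a \<noteq> 0" and "g \<noteq> 0" and "\<And>h. g \<bullet> h < 0 \<Longrightarrow> a \<bullet> h \<ge> 0"
  shows "sgn a = - sgn g"
proof (rule ccontr)
  define c where "c = sgn a \<bullet> sgn g"
  define h where "h = - (sgn a + sgn g)"
  have unit: "sgn a \<bullet> sgn a = 1" "sgn g \<bullet> sgn g = 1"
    using assms(1,2) norm_eq_1[of "sgn a"] norm_eq_1[of "sgn g"] by (simp_all add: norm_sgn)
  assume "sgn a \<noteq> - sgn g"
  \<comment> \<open>then h makes an obtuse angle with both a and g\<close>
  then have "h \<noteq> 0"
    by (metis h_def neg_equal_0_iff_equal eq_neg_iff_add_eq_0)
  then have "0 < h \<bullet> h"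
    by simp
  also have "h \<bullet> h = 2 + 2 * c"
    by (simp add: h_def c_def inner_add_left inner_add_right inner_diff_left inner_diff_right
        inner_commute unit)
  finally have "c > -1"
    by simp
  have "g \<bullet> h = - (norm g * (1 + c))"
    using inner_eq_norm_mult_inner_sgn[of g h]
    by (simp add: h_def c_def inner_add_right inner_commute unit algebra_simps)
  also have "\<dots> < 0"
    using assms(2) \<open>c > -1\<close> by simp
  finally have "a \<bullet> h \<ge> 0"
    by (rule assms(3))
  moreover have "a \<bullet> h = - (norm a * (1 + c))"
    using inner_eq_norm_mult_inner_sgn[of a h]
    by (simp add: h_def c_def inner_add_right unit algebra_simps)
  moreover have "norm a * (1 + c) > 0"
    using assms(1) \<open>c > -1\<close> by simp
  ultimately show False
    by linarith
qed

lemma inner_unit_normal_unique: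
  assumes "open \<Omega>" and "X \<in> frontier \<Omega>" and "inner_unit_normal \<Omega> X n"
    and "a \<noteq> 0" and "\<forall>y\<in>\<Omega>. a \<bullet> (y - X) \<ge> 0"
  shows "n = sgn a"
proof -
  obtain V \<rho> \<rho>' where D: "C1_defining \<Omega> X V \<rho> \<rho>'" and n: "n = - ((1 / norm (\<rho>' X)) *\<^sub>R \<rho>' X)"
    using assms(3) unfolding inner_unit_normal_def by blast
  have "a \<bullet> h \<ge> 0" if h: "\<rho>' X \<bullet> h < 0" for h
  proof -
    obtain s :: real where "s > 0" "X + s *\<^sub>R h \<in> \<Omega>"
      using eventually_conj[OF C1_defining_eventually_inside[OF assms(1,2) D h] eventually_at_right_less]
        eventually_happens'[OF trivial_limit_at_right_real] by blast
    then have "s * (a \<bullet> h) \<ge> 0"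
      using assms(5) by force
    with \<open>s > 0\<close> show ?thesis
      by (simp add: zero_le_mult_iff)
  qed
  then have "sgn a = - sgn (\<rho>' X)"
    using D assms(4) by (intro sgn_eq_neg_sgn_if_halfspace_subset) (auto simp: C1_defining_def)
  then show ?thesis
    by (simp add: n sgn_div_norm divide_inverse_commute)
qed

subsection \<open>The envelope as a distance profile\<close>

lemma closest_point_closure_in_frontier:
  fixes \<Omega> :: "'a::euclidean_space set"
  assumes "open \<Omega>" and "\<Omega> \<noteq> {}" and "x \<notin> closure \<Omega>"
  shows "closest_point (closure \<Omega>) x \<in> frontier \<Omega>"
proof -
  have "\<Omega> \<subseteq> rel_interior (closure \<Omega>)"
    using assms(1) interior_maximal[OF closure_subset assms(1)] interior_subset_rel_interior by blast
  moreover have "interior (closure \<Omega>) \<noteq> {}"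
    using assms(1,2) interior_maximal[OF closure_subset assms(1)] by blast
  then have "affine hull (closure \<Omega>) = UNIV"
    by (rule affine_hull_nonempty_interior)
  then have "closest_point (closure \<Omega>) x \<in> rel_frontier (closure \<Omega>)"
    using assms(2,3) rel_interior_subset[of "closure \<Omega>"]
    by (intro closest_point_in_rel_frontier) auto
  ultimately show ?thesis
    using assms(1) by (auto simp: rel_frontier_def frontier_def interior_open)
qed

lemma infdist_closest_point:
  fixes S :: "'a::euclidean_space set"
  assumes "closed S" and "S \<noteq> {}"
  shows "infdist x S = dist x (closest_point S x)"
proof (rule antisym)
  show "infdist x S \<le> dist x (closest_point S x)"
    by (rule infdist_le[OF closest_point_in_set[OF assms]])
  obtain q where "q \<in> S" "infdist x S = dist x q"
    using infdist_attains_inf[OF assms] by blast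
  then show "dist x (closest_point S x) \<le> infdist x S"
    using closest_point_le[OF assms(1)] by simp
qed

lemma inner_unit_normal_ge_neg_infdist:
  fixes \<Omega> :: "'a::euclidean_space set"
  assumes "open \<Omega>" and "convex \<Omega>" and "X \<in> frontier \<Omega>" and "inner_unit_normal \<Omega> X n"
  shows "n \<bullet> (x - X) \<ge> - infdist x (closure \<Omega>)"
proof -
  have "closure \<Omega> \<noteq> {}"
    using assms(3) by (auto simp: frontier_def)
  then obtain q where q: "q \<in> closure \<Omega>" "infdist x (closure \<Omega>) = dist x q"
    using infdist_attains_inf[OF closed_closure] by blast
  have "n \<bullet> (q - X) \<ge> 0"
    by (rule inner_unit_normal_supporting[OF assms q(1)])
  moreover have "n \<bullet> (x - q) \<ge> - norm (x - q)"
    using Cauchy_Schwarz_ineq2[of n "x - q"] inner_unit_normal_norm[OF assms(4)] by simp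
  moreover have "n \<bullet> (x - X) = n \<bullet> (x - q) + n \<bullet> (q - X)"
    by (simp add: inner_diff_right)
  ultimately show ?thesis
    using q(2) by (simp add: dist_norm)
qed

lemma h_star_eq_infdist:
  fixes \<Omega> :: "'a::euclidean_space set"
  assumes "open \<Omega>" and "convex \<Omega>" and "\<Omega> \<noteq> {}" and "lam0 \<ge> 0"
    and "\<forall>X\<in>frontier \<Omega>. inner_unit_normal \<Omega> X (\<nu> X)" and "x \<notin> \<Omega>"
  shows "h_star \<Omega> \<nu> h0 lam0 x = h0 - lam0 * infdist x (closure \<Omega>)"
proof -
  let ?C = "closure \<Omega>"
  let ?t = "\<lambda>X. h0 + lam0 * (\<nu> X \<bullet> (x - X))"
  have lower: "h0 - lam0 * infdist x ?C \<le> ?t X" if "X \<in> frontier \<Omega>" for X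
  proof -
    have "lam0 * (- infdist x ?C) \<le> lam0 * (\<nu> X \<bullet> (x - X))"
      using inner_unit_normal_ge_neg_infdist[OF assms(1,2) that] that assms(4,5)
      by (intro mult_left_mono) auto
    then show ?thesis
      by simp
  qed
  obtain X0 where X0: "X0 \<in> frontier \<Omega>" "?t X0 = h0 - lam0 * infdist x ?C"
  proof (cases "x \<in> ?C")
    case True
    then have "x \<in> frontier \<Omega>"
      using assms(1,6) by (simp add: frontier_def interior_open)
    with True show ?thesis
      using that[of x] by simp
  next
    case False
    let ?q = "closest_point ?C x"
    have q: "?q \<in> frontier \<Omega>"
      using closest_point_closure_in_frontier[OF assms(1,3) False] .
    have "?q \<noteq> x"
      using False q by (auto simp: frontier_def)
    have "(?q - x) \<bullet> (y - ?q) \<ge> 0" if "y \<in> \<Omega>" for y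
    proof -
      have "(x - ?q) \<bullet> (y - ?q) \<le> 0"
        using closest_point_dot[OF convex_closure[OF assms(2)] closed_closure] closure_subset that
        by blast
      then show ?thesis
        by (simp add: inner_diff_left)
    qed
    moreover have "inner_unit_normal \<Omega> ?q (\<nu> ?q)"
      using assms(5) q by blast
    ultimately have "\<nu> ?q = sgn (?q - x)"
      using \<open>?q \<noteq> x\<close> by (intro inner_unit_normal_unique[OF assms(1) q]) auto
    moreover have "x - ?q = - (?q - x)"
      by simp
    ultimately have "?t ?q = h0 - lam0 * dist x ?q"
      by (simp only: inner_minus_right sgn_inner_self) (simp add: dist_norm norm_minus_commute)
    moreover have "infdist x ?C = dist x ?q"
      using assms(3) by (intro infdist_closest_point) auto
    ultimately show ?thesis
      using that[OF q] by simp
  qed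
  show ?thesis
    unfolding h_star_def using lower
    by (intro cInf_eq_minimum) (use X0 in \<open>auto intro!: image_eqI[where x = X0]\<close>)
qed

subsection \<open>The distance profile is a weak solution\<close>

lemma convex_on_infdist:
  fixes C :: "'a::euclidean_space set"
  assumes "convex C" and "closed C"
  shows "convex_on UNIV (\<lambda>x. infdist x C)"
proof (cases "C = {}")
  case True
  then show ?thesis
    by (simp add: infdist_def convex_on_const)
next
  case False
  show ?thesis
  proof (rule convex_onI)
    fix t :: real and x y assume t: "0 < t" "t < 1"
    obtain qx where qx: "qx \<in> C" "infdist x C = dist x qx"
      using infdist_attains_inf[OF assms(2) False] by blast
    obtain qy where qy: "qy \<in> C" "infdist y C = dist y qy"
      using infdist_attains_inf[OF assms(2) False] by blast
    have "(1 - t) *\<^sub>R qx + t *\<^sub>R qy \<in> C"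
      using convexD[OF assms(1) qx(1) qy(1)] t by simp
    then have "infdist ((1 - t) *\<^sub>R x + t *\<^sub>R y) C
        \<le> norm ((1 - t) *\<^sub>R (x - qx) + t *\<^sub>R (y - qy))"
      by (rule infdist_le[THEN order_trans]) (simp add: dist_norm algebra_simps)
    also have "\<dots> \<le> (1 - t) * infdist x C + t * infdist y C"
      using norm_triangle_ineq[of "(1 - t) *\<^sub>R (x - qx)" "t *\<^sub>R (y - qy)"] t qx qy
      by (simp add: dist_norm)
    finally show "infdist ((1 - t) *\<^sub>R x + t *\<^sub>R y) C
        \<le> (1 - t) * infdist x C + t * infdist y C" .
  qed simp
qed

lemma local_subgradient_eq_gradient:
  fixes f :: "'a::real_inner \<Rightarrow> real"
  assumes "(f has_derivative (\<lambda>h. g \<bullet> h)) (at x)"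
    and "eventually (\<lambda>y. f x + p \<bullet> (y - x) \<le> f y) (at x)"
  shows "p = g"
proof -
  have "((\<lambda>y. f y - p \<bullet> (y - x)) has_derivative (\<lambda>h. g \<bullet> h - p \<bullet> h)) (at x)"
    using assms(1) by (auto intro!: derivative_eq_intros)
  moreover have "eventually (\<lambda>y. f x - p \<bullet> (x - x) \<le> f y - p \<bullet> (y - x)) (at x)"
    using assms(2) by eventually_elim simp
  ultimately have "(\<lambda>h. g \<bullet> h - p \<bullet> h) = (\<lambda>h. 0)"
    by (rule has_derivative_local_min)
  then have "(g - p) \<bullet> (g - p) = 0"
    by (metis inner_diff_left)
  then show ?thesis
    by simp
qed

lemma norm_local_subgradient_infdist:
  fixes C :: "'a::euclidean_space set"
  assumes "closed C" and "C \<noteq> {}" and "x \<notin> C" and "c \<ge> 0"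
    and "eventually (\<lambda>y. c * infdist x C + p \<bullet> (y - x) \<le> c * infdist y C) (at x)"
  shows "norm p = c"
proof -
  obtain q where q: "q \<in> C" "infdist x C = dist x q"
    using infdist_attains_inf[OF assms(1,2)] by blast
  have "x - q \<noteq> 0"
    using q(1) assms(3) by auto
  have "((\<lambda>y. y - q) has_derivative (\<lambda>h. h)) (at x)"
    by (auto intro!: derivative_eq_intros)
  then have "((\<lambda>y. norm (y - q)) has_derivative (\<lambda>h. h \<bullet> sgn (x - q))) (at x)"
    using has_derivative_compose[where f = "\<lambda>y. y - q" and g = norm, OF _ has_derivative_norm]
      \<open>x - q \<noteq> 0\<close> by simp
  then have "((\<lambda>y. c * dist y q) has_derivative (\<lambda>h. (c *\<^sub>R sgn (x - q)) \<bullet> h)) (at x)"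
    using has_derivative_mult_right by (simp add: dist_norm inner_commute)
  moreover have "eventually (\<lambda>y. c * dist x q + p \<bullet> (y - x) \<le> c * dist y q) (at x)"
    using assms(5)
  proof eventually_elim
    case (elim y)
    have "c * infdist y C \<le> c * dist y q"
      using infdist_le[OF q(1)] assms(4) by (rule mult_left_mono)
    with elim show ?case
      using q(2) by simp
  qed
  ultimately have "p = c *\<^sub>R sgn (x - q)"
    by (rule local_subgradient_eq_gradient)
  then show ?thesis
    using assms(4) \<open>x - q \<noteq> 0\<close> by (simp add: norm_sgn)
qed

lemma negligible_subgrad_set_infdist_profile:
  fixes C :: "'a::euclidean_space set"
  assumes "closed C" and "C \<noteq> {}" and "lam0 \<ge> 0" and "open D" and "D \<inter> C = {}" and "E \<subseteq> D"
  shows "negligible (subgrad_set D (\<lambda>x. - (h0 - lam0 * infdist x C)) E)"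
proof -
  have "subgrad_set D (\<lambda>x. - (h0 - lam0 * infdist x C)) E \<subseteq> sphere 0 lam0"
  proof
    fix p assume "p \<in> subgrad_set D (\<lambda>x. - (h0 - lam0 * infdist x C)) E"
    then obtain x where "x \<in> E"
      and sub: "\<forall>y\<in>D. lam0 * infdist x C + p \<bullet> (y - x) \<le> lam0 * infdist y C"
      by (auto simp: subgrad_set_def subgrad_def)
    have "x \<in> D" "x \<notin> C"
      using \<open>x \<in> E\<close> assms(5,6) by auto
    have "eventually (\<lambda>y. y \<in> D) (at x)"
      using assms(4) \<open>x \<in> D\<close> by (rule eventually_at_in_open')
    then have "eventually (\<lambda>y. lam0 * infdist x C + p \<bullet> (y - x) \<le> lam0 * infdist y C) (at x)"
      by eventually_elim (use sub in blast)
    then have "norm p = lam0"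
      by (rule norm_local_subgradient_infdist[OF assms(1,2) \<open>x \<notin> C\<close> assms(3)])
    then show "p \<in> sphere 0 lam0"
      by simp
  qed
  then show ?thesis
    by (rule negligible_subset[OF negligible_sphere])
qed

lemma nearest_point_along_supporting_normal:
  fixes C :: "'a::real_inner set"
  assumes "q \<in> C" and "infdist x C = dist x q" and "norm n = 1"
    and "\<forall>y. infdist y C < infdist x C \<longrightarrow> 0 \<le> n \<bullet> (y - x)"
  shows "q = x + infdist x C *\<^sub>R n"
proof -
  define c where "c = infdist x C"
  define w where "w = q - x"
  have ww: "w \<bullet> w = c * c" and nn: "n \<bullet> n = 1"
    using assms(2,3) by (simp_all add: c_def w_def dist_norm norm_minus_commute power2_eq_square
        flip: power2_norm_eq_inner norm_eq_1)
  \<comment> \<open>the points q - s n with 0 < s < c lie in the open sublevel set, so n \<bullet> w \<ge> c = norm w\<close>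
  have "c \<le> n \<bullet> w" if "c > 0"
  proof (rule dense_le_bounded[OF that])
    fix s assume s: "0 < s" "s < c"
    have "infdist (q - s *\<^sub>R n) C \<le> s"
      using infdist_le[OF assms(1), of "q - s *\<^sub>R n"] s(1) assms(3) by (simp add: dist_norm)
    then have "0 \<le> n \<bullet> (q - s *\<^sub>R n - x)"
      using assms(4) s(2) by (simp add: c_def)
    then show "s \<le> n \<bullet> w"
      by (simp add: w_def inner_diff_right nn)
  qed
  moreover have "c \<ge> 0"
    by (simp add: c_def infdist_nonneg)
  ultimately have "(w - c *\<^sub>R n) \<bullet> (w - c *\<^sub>R n) \<le> 0"
    by (cases "c = 0")
       (auto simp: inner_diff_left inner_diff_right inner_commute ww nn algebra_simps
             intro!: mult_left_mono)
  then have "(w - c *\<^sub>R n) \<bullet> (w - c *\<^sub>R n) = 0"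
    using inner_ge_zero[of "w - c *\<^sub>R n"] by linarith
  then have "w = c *\<^sub>R n"
    by simp
  then show ?thesis
    by (simp add: w_def c_def algebra_simps)
qed

lemma infdist_along_nearest_direction:
  assumes "x + c *\<^sub>R n \<in> C" and "infdist x C = c" and "norm n = 1" and "0 \<le> t" and "t \<le> c"
  shows "infdist (x + t *\<^sub>R n) C = c - t"
proof (rule antisym)
  have "infdist (x + t *\<^sub>R n) C \<le> dist (x + t *\<^sub>R n) (x + c *\<^sub>R n)"
    by (rule infdist_le[OF assms(1)])
  also have "\<dots> = c - t"
    using assms(3-5) by (simp add: dist_norm flip: scaleR_diff_left)
  finally show "infdist (x + t *\<^sub>R n) C \<le> c - t" .
  show "c - t \<le> infdist (x + t *\<^sub>R n) C"
    using infdist_triangle[of x C "x + t *\<^sub>R n"] assms(2-4) by (simp add: dist_norm)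
qed

lemma tendsto_infdist_profile_along_supporting_normal:
  fixes C :: "'a::euclidean_space set"
  assumes "closed C" and "C \<noteq> {}" and "lam0 > 0" and "h0 > 0"
    and "lam0 * infdist x0 C = h0" and "norm n = 1"
    and "\<forall>y. 0 < h0 - lam0 * infdist y C \<longrightarrow> 0 \<le> n \<bullet> (y - x0)"
  shows "((\<lambda>t. (h0 - lam0 * infdist (x0 + t *\<^sub>R n) C) / t) \<longlongrightarrow> lam0) (at_right 0)"
proof -
  define c where "c = infdist x0 C"
  have "c > 0"
    using assms(3-5) infdist_nonneg[of x0 C] by (auto simp: c_def intro: ccontr)
  obtain q where q: "q \<in> C" "infdist x0 C = dist x0 q"
    using infdist_attains_inf[OF assms(1,2)] by blast
  have "\<forall>y. infdist y C < infdist x0 C \<longrightarrow> 0 \<le> n \<bullet> (y - x0)"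
    using assms(3,5,7) by auto
  then have "x0 + c *\<^sub>R n \<in> C"
    using nearest_point_along_supporting_normal[OF q assms(6)] q(1) by (simp add: c_def)
  have "eventually (\<lambda>t. t \<in> {0<..<c}) (at_right 0)"
    using eventually_at_right_real[OF \<open>c > 0\<close>] .
  then have "eventually (\<lambda>t. (h0 - lam0 * infdist (x0 + t *\<^sub>R n) C) / t = lam0) (at_right 0)"
  proof eventually_elim
    case (elim t)
    then have "infdist (x0 + t *\<^sub>R n) C = c - t"
      using infdist_along_nearest_direction[OF \<open>x0 + c *\<^sub>R n \<in> C\<close> _ assms(6)] by (simp add: c_def)
    then have "h0 - lam0 * infdist (x0 + t *\<^sub>R n) C = lam0 * c - lam0 * (c - t)"
      using assms(5) by (simp only: c_def)
    also have "\<dots> = lam0 * t"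
      by (simp add: algebra_simps)
    finally have "h0 - lam0 * infdist (x0 + t *\<^sub>R n) C = lam0 * t" .
    with elim show ?case
      by simp
  qed
  then show ?thesis
    by (rule tendsto_eventually)
qed

lemma weak_solution_cong_outside:
  assumes "open \<Omega>" and "\<And>x. x \<notin> \<Omega> \<Longrightarrow> u x = v x"
  shows "weak_solution \<Omega> h0 lam0 u \<longleftrightarrow> weak_solution \<Omega> h0 lam0 v"
proof -
  define P where "P = {x. 0 < ext_fun \<Omega> h0 v x}"
  let ?D = "P - closure \<Omega>"
  have ext: "ext_fun \<Omega> h0 u = ext_fun \<Omega> h0 v"
    using assms(2) by (auto simp: ext_fun_def)
  have outside: "u y = v y" if "y \<notin> closure \<Omega>" for y
    using that assms(2) closure_subset by blast
  have "subgrad ?D (\<lambda>x. - u x) x = subgrad ?D (\<lambda>x. - v x) x" if "x \<in> ?D" for x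
    using that unfolding subgrad_def by (auto simp: outside)
  then have "subgrad_set ?D (\<lambda>x. - u x) E = subgrad_set ?D (\<lambda>x. - v x) E" if "E \<subseteq> ?D" for E
    using that unfolding subgrad_set_def by (intro SUP_cong) auto
  then have gradient:
    "(\<forall>E. E \<in> sets borel \<and> E \<subseteq> ?D \<longrightarrow> negligible (subgrad_set ?D (\<lambda>x. - u x) E))
      \<longleftrightarrow> (\<forall>E. E \<in> sets borel \<and> E \<subseteq> ?D \<longrightarrow> negligible (subgrad_set ?D (\<lambda>x. - v x) E))"
    by auto
  have boundary: "(\<forall>x\<in>frontier \<Omega>. u x = h0) \<longleftrightarrow> (\<forall>x\<in>frontier \<Omega>. v x = h0)"
    using assms by (auto simp: frontier_def interior_open)
  have limit: "((\<lambda>t. u (x0 + t *\<^sub>R n) / t) \<longlongrightarrow> lam0) (at_right 0)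
      \<longleftrightarrow> ((\<lambda>t. v (x0 + t *\<^sub>R n) / t) \<longlongrightarrow> lam0) (at_right 0)"
    if "x0 \<notin> closure \<Omega>" for x0 n
  proof (rule tendsto_cong)
    have "eventually (\<lambda>t. x0 + t *\<^sub>R n \<in> - closure \<Omega>) (at_right 0)"
      using that by (intro eventually_ray_in_open) auto
    then show "eventually (\<lambda>t. u (x0 + t *\<^sub>R n) / t = v (x0 + t *\<^sub>R n) / t) (at_right 0)"
      by eventually_elim (simp add: outside)
  qed
  then have free_boundary:
    "(\<forall>x0\<in>frontier P - closure \<Omega>. \<forall>H n.
        Q x0 H n \<longrightarrow> ((\<lambda>t. u (x0 + t *\<^sub>R n) / t) \<longlongrightarrow> lam0) (at_right 0))
      \<longleftrightarrow> (\<forall>x0\<in>frontier P - closure \<Omega>. \<forall>H n.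
        Q x0 H n \<longrightarrow> ((\<lambda>t. v (x0 + t *\<^sub>R n) / t) \<longlongrightarrow> lam0) (at_right 0))"
    for Q
    by auto
  show ?thesis
    unfolding weak_solution_def Let_def ext P_def[symmetric] gradient boundary free_boundary ..
qed

theorem weak_solution_infdist_profile:
  fixes \<Omega> :: "'a::euclidean_space set"
  assumes "open \<Omega>" and "convex \<Omega>" and "\<Omega> \<noteq> {}" and "h0 > 0" and "lam0 > 0"
  shows "weak_solution \<Omega> h0 lam0 (\<lambda>x. h0 - lam0 * infdist x (closure \<Omega>))"
proof -
  let ?C = "closure \<Omega>"
  define \<phi> where "\<phi> x = h0 - lam0 * infdist x ?C" for x
  define P where "P = {x. 0 < \<phi> x}"
  have "\<phi> x = h0" if "x \<in> \<Omega>" for x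
    using closure_subset[of \<Omega>] that by (simp add: \<phi>_def subsetD)
  then have ext: "ext_fun \<Omega> h0 \<phi> = \<phi>"
    by (auto simp: ext_fun_def)
  have cont: "continuous_on UNIV \<phi>"
    unfolding \<phi>_def by (intro continuous_intros)
  then have "open P"
    unfolding P_def by (rule open_Collect_less[OF continuous_on_const])
  have "convex_on UNIV (\<lambda>x. lam0 * infdist x ?C + - h0)"
    using assms(2,5) convex_on_infdist[of ?C]
    by (intro convex_on_add convex_on_cmul) (auto simp: convex_on_const)
  then have concave: "concave_on UNIV \<phi>"
    by (simp add: concave_on_def \<phi>_def)
  have gradient: "negligible (subgrad_set (P - ?C) (\<lambda>x. - \<phi> x) E)" if "E \<subseteq> P - ?C" for E
    unfolding \<phi>_def using assms(3,5) that \<open>open P\<close>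
    by (intro negligible_subgrad_set_infdist_profile) auto
  have boundary: "\<phi> x = h0" if "x \<in> frontier \<Omega>" for x
    using that by (simp add: \<phi>_def frontier_def)
  have free_boundary: "((\<lambda>t. \<phi> (x0 + t *\<^sub>R n) / t) \<longlongrightarrow> lam0) (at_right 0)"
    if "x0 \<in> frontier P" and "hyperplane_inner_normal P x0 H n" for x0 H n
  proof -
    have "closure P \<subseteq> {x. 0 \<le> \<phi> x}"
      by (rule closure_minimal) (auto simp: P_def intro: closed_Collect_le[OF continuous_on_const cont])
    moreover have "x0 \<in> closure P" "x0 \<notin> P"
      using that(1) \<open>open P\<close> by (auto simp: frontier_def interior_open)
    ultimately have "lam0 * infdist x0 ?C = h0"
      by (force simp: P_def \<phi>_def)
    moreover have "norm n = 1" and "\<forall>y. 0 < h0 - lam0 * infdist y ?C \<longrightarrow> 0 \<le> n \<bullet> (y - x0)"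
      using that(2) by (auto simp: hyperplane_inner_normal_def P_def \<phi>_def)
    ultimately show ?thesis
      unfolding \<phi>_def using assms(3-5)
      by (intro tendsto_infdist_profile_along_supporting_normal) auto
  qed
  show ?thesis
    unfolding weak_solution_def Let_def \<phi>_def[symmetric] ext P_def[symmetric]
    using concave gradient boundary free_boundary by (intro conjI allI impI ballI) auto
qed

theorem proposition2p2:
  fixes \<Omega> :: "'a::euclidean_space set" and \<nu> :: "'a \<Rightarrow> 'a" and h0 lam0 :: real
  assumes "DIM('a) \<ge> 2"
    and "h0 > 0" and "lam0 > 0"
    and "open \<Omega>" and "connected \<Omega>" and "\<Omega> \<noteq> {}" and "bounded \<Omega>" and "convex \<Omega>"
    and "C1_boundary \<Omega>"
    and "\<forall>X\<in>frontier \<Omega>. inner_unit_normal \<Omega> X (\<nu> X)"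
  shows "weak_solution \<Omega> h0 lam0 (h_star \<Omega> \<nu> h0 lam0)"
proof -
  have "weak_solution \<Omega> h0 lam0 (\<lambda>x. h0 - lam0 * infdist x (closure \<Omega>))"
    using assms by (intro weak_solution_infdist_profile) auto
  moreover have "h_star \<Omega> \<nu> h0 lam0 x = h0 - lam0 * infdist x (closure \<Omega>)" if "x \<notin> \<Omega>" for x
    using assms that by (intro h_star_eq_infdist) auto
  then have "weak_solution \<Omega> h0 lam0 (h_star \<Omega> \<nu> h0 lam0)
      \<longleftrightarrow> weak_solution \<Omega> h0 lam0 (\<lambda>x. h0 - lam0 * infdist x (closure \<Omega>))"
    by (rule weak_solution_cong_outside[OF assms(4)])
  ultimately show ?thesis
    by blast
qed

end
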